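(* Let $\mathcal{H}$ be a real Hilbert space, $x^*\in\mathcal{H}$, $U$ an open neighborhood of $x^*$, and $f:U\to\mathcal{H}$ a continuously (Fréchet) differentiable map on $U$ such that $f'(x^* )$ is invertible (a bijective bounded linear operator) and the equation $f(x)=0$ has a solution in $U$. Define $v:\mathcal{H}\to\mathcal{H}$ by $v(x)=f'(x^* )x$. Then the pair $(f,v)$ is locally strongly monotone: there exist $\varepsilon>0$ with $B(x^*,\varepsilon)\subset U$ and $\alpha>0$ such that for all $x,y\in B(x^*,\varepsilon)$, \[ \langle f(x)-f(y),\, v(x)-v(y)\rangle\ \ge\ \alpha\|x-y\|^2 . \]
   Context: $B(x^*,\varepsilon)$ denotes the ball of center $x^*$ and radius $\varepsilon$ in $\mathcal{H}$. *)

theory Defs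
  imports "HOL-Analysis.Analysis"
begin

end

theory Submission
  imports Defs
begin

text \<open>
  Write \<open>A = f'(x*)\<close>. By the bounded inverse theorem (Baire category gives a ball in the
  closure of some \<open>A(B(0,n))\<close>; rescaling and successive approximation then solve \<open>A x = y\<close>
  with \<open>\<parallel>x\<parallel> \<le> C\<parallel>y\<parallel>\<close>), \<open>A\<close> is bounded below: \<open>\<parallel>A h\<parallel> \<ge> c\<parallel>h\<parallel>\<close>. By continuity of \<open>f'\<close> the
  linearisation error \<open>r = f x - f y - A (x - y)\<close> satisfies \<open>\<parallel>r\<parallel> \<le> (c/2)\<parallel>x - y\<parallel>\<close> near \<open>x*\<close>,
  so \<open>\<langle>A h + r, A h\<rangle> \<ge> \<parallel>A h\<parallel>\<^sup>2 - (c/2)\<parallel>h\<parallel>\<parallel>A h\<parallel> \<ge> (c\<^sup>2/2)\<parallel>h\<parallel>\<^sup>2\<close>.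
\<close>

text \<open>The library versions of the next two lemmas require sort \<open>banach\<close>, which is not
  derived from \<open>{real_normed_vector, complete_space}\<close>.\<close>

lemma summable_norm_cancel_complete:
  fixes f :: "nat \<Rightarrow> 'a::{real_normed_vector,complete_space}"
  assumes "summable (\<lambda>n. norm (f n))"
  shows "summable f"
proof -
  have tail: "norm ((\<Sum>k<m. f k) - (\<Sum>k<n. f k))
      \<le> \<bar>(\<Sum>k<m. norm (f k)) - (\<Sum>k<n. norm (f k))\<bar>" if "n \<le> m" for m n
  proof -
    have "(\<Sum>k<m. f k) - (\<Sum>k<n. f k) = (\<Sum>k\<in>{n..<m}. f k)"
      and "(\<Sum>k<m. norm (f k)) - (\<Sum>k<n. norm (f k)) = (\<Sum>k\<in>{n..<m}. norm (f k))"
      using that by (simp_all add: sum_diff[symmetric])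
    then show ?thesis by (simp add: norm_sum sum_nonneg)
  qed
  have "norm ((\<Sum>k<m. f k) - (\<Sum>k<n. f k))
      \<le> \<bar>(\<Sum>k<m. norm (f k)) - (\<Sum>k<n. norm (f k))\<bar>" for m n
    using tail[of n m] tail[of m n]
    by (cases n m rule: le_cases) (simp_all add: norm_minus_commute abs_minus_commute)
  moreover have "Cauchy (\<lambda>n. \<Sum>k<n. norm (f k))"
    using assms by (simp add: summable_iff_convergent Cauchy_convergent_iff)
  ultimately have "Cauchy (\<lambda>n. \<Sum>k<n. f k)"
    unfolding Cauchy_iff by (smt (verit) real_norm_def)
  then show ?thesis by (simp add: summable_iff_convergent Cauchy_convergent_iff)
qed

lemma summable_norm_complete:
  fixes f :: "nat \<Rightarrow> 'a::{real_normed_vector,complete_space}"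
  assumes "summable (\<lambda>n. norm (f n))"
  shows "norm (suminf f) \<le> (\<Sum>n. norm (f n))"
proof (rule LIMSEQ_le)
  show "(\<lambda>n. norm (\<Sum>k<n. f k)) \<longlonglongrightarrow> norm (suminf f)"
    using assms by (intro tendsto_norm summable_LIMSEQ) (rule summable_norm_cancel_complete)
  show "(\<lambda>n. \<Sum>k<n. norm (f k)) \<longlonglongrightarrow> (\<Sum>n. norm (f n))"
    using assms by (rule summable_LIMSEQ)
  show "\<exists>N. \<forall>n\<ge>N. norm (\<Sum>k<n. f k) \<le> (\<Sum>k<n. norm (f k))"
    using norm_sum by blast
qed

lemma surj_closure_image_cball_contains_ball:
  fixes A :: "'a::real_normed_vector \<Rightarrow> 'b::{real_normed_vector,complete_space}"
  assumes "surj A"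
  obtains n y r where "r > 0" "ball y r \<subseteq> closure (A ` cball 0 (real n))"
proof -
  define T where "T n = closure (A ` cball 0 (real n))" for n
  have "(\<Union>n. T n) = UNIV"
  proof (intro set_eqI iffI UNIV_I)
    fix y
    obtain x where "y = A x" using assms by (metis surjD)
    then have "y \<in> A ` cball 0 (real (nat \<lceil>norm x\<rceil>))"
      by (simp add: real_nat_ceiling_ge)
    then have "y \<in> T (nat \<lceil>norm x\<rceil>)" unfolding T_def by (rule closure_subset[THEN subsetD])
    then show "y \<in> (\<Union>n. T n)" by blast
  qed
  then have nonempty: "euclidean interior_of (\<Union>(range T)) \<noteq> {}" by simp
  have "euclidean interior_of (\<Union>(range T)) = {}" if empty: "\<And>n. interior (T n) = {}"
  proof (rule Baire_category_alt[OF disjI1[OF completely_metrizable_space_euclidean]])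
    show "countable (range T)" by simp
    fix S assume "S \<in> range T"
    then show "closedin euclidean S \<and> euclidean interior_of S = {}"
      using empty by (auto simp: T_def)
  qed
  with nonempty obtain n y where "y \<in> interior (T n)" by blast
  then obtain r where "r > 0" "ball y r \<subseteq> interior (T n)"
    using open_contains_ball_eq[OF open_interior] by blast
  then show thesis
    using interior_subset[of "T n"] unfolding T_def by (intro that) auto
qed

lemma closure_image_cball_contains_ball_0:
  fixes A :: "'a::real_normed_vector \<Rightarrow> 'b::real_normed_vector"
  assumes "linear A" and "ball y r \<subseteq> closure (A ` cball 0 M)"
  shows "ball 0 r \<subseteq> closure (A ` cball 0 (2 * M))"
proof (intro subsetI, unfold closure_approachable, intro allI impI)
  fix z :: 'b and e :: real
  assume z: "z \<in> ball 0 r" and "0 < e"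
  have approx: "\<exists>a\<in>cball 0 M. dist (A a) w < e / 2" if "w \<in> ball y r" for w
  proof -
    have "w \<in> closure (A ` cball 0 M)" using that assms(2) by blast
    then show ?thesis using \<open>e > 0\<close> unfolding closure_approachable by (metis half_gt_zero imageE)
  qed
  have "r > 0"
    using z norm_ge_zero[of z] unfolding mem_ball_0 by linarith
  with z have "y \<in> ball y r" "y + z \<in> ball y r"
    by (auto simp: dist_norm)
  then obtain a b where "a \<in> cball 0 M" "dist (A a) (y + z) < e / 2"
    and "b \<in> cball 0 M" "dist (A b) y < e / 2"
    using approx by blast
  have "dist (A (a - b)) z = norm ((A a - (y + z)) - (A b - y))"
    by (simp add: dist_norm linear_diff[OF assms(1)] algebra_simps)
  also have "\<dots> \<le> norm (A a - (y + z)) + norm (A b - y)"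
    by (rule norm_triangle_ineq4)
  also have "\<dots> < e"
    using \<open>dist (A a) (y + z) < e / 2\<close> \<open>dist (A b) y < e / 2\<close> by (simp add: dist_norm)
  finally have "dist (A (a - b)) z < e" .
  moreover have "a - b \<in> cball 0 (2 * M)"
    using \<open>a \<in> cball 0 M\<close> \<open>b \<in> cball 0 M\<close> norm_triangle_ineq4[of a b] by simp
  ultimately show "\<exists>w\<in>A ` cball 0 (2 * M). dist w z < e" by blast
qed

lemma linear_approximate_inverse:
  fixes A :: "'a::real_normed_vector \<Rightarrow> 'b::real_normed_vector"
  assumes lin: "linear A" and "r > 0" and ball: "ball 0 r \<subseteq> closure (A ` cball 0 M)"
  obtains K where "K > 0" "\<And>z. \<exists>x. norm x \<le> K * norm z \<and> norm (A x - z) \<le> norm z / 2"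
proof
  have "cball (0::'a) M \<noteq> {}"
    using ball \<open>r > 0\<close> by auto
  then have "M \<ge> 0" by simp
  then show "2 * M / r + 1 > 0"
    using \<open>r > 0\<close> by (simp add: add_nonneg_pos)
  fix z
  show "\<exists>x. norm x \<le> (2 * M / r + 1) * norm z \<and> norm (A x - z) \<le> norm z / 2"
  proof (cases "z = 0")
    case True
    then show ?thesis by (intro exI[of _ 0]) (simp add: linear_0[OF lin])
  next
    case False
    define t where "t = r / (2 * norm z)"
    have "t > 0" using False \<open>r > 0\<close> by (simp add: t_def)
    have "t *\<^sub>R z \<in> closure (A ` cball 0 M)"
      using ball False \<open>r > 0\<close> by (auto simp: t_def subset_eq)
    moreover have "t * norm z / 2 > 0" using \<open>t > 0\<close> False by simp
    ultimately obtain x where x: "norm x \<le> M" "norm (A x - t *\<^sub>R z) < t * norm z / 2"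
      unfolding closure_approachable by (metis dist_norm imageE mem_cball_0)
    have rescale: "A (x /\<^sub>R t) - z = (A x - t *\<^sub>R z) /\<^sub>R t"
      using \<open>t > 0\<close> by (simp add: linear_scale[OF lin] algebra_simps)
    have "norm (A (x /\<^sub>R t) - z) = norm (A x - t *\<^sub>R z) / t"
      unfolding rescale using \<open>t > 0\<close> by (simp add: divide_inverse_commute)
    also have "\<dots> \<le> norm z / 2"
      using x(2) \<open>t > 0\<close> by (simp add: pos_divide_le_eq mult.commute)
    finally have "norm (A (x /\<^sub>R t) - z) \<le> norm z / 2" .
    moreover have "norm (x /\<^sub>R t) \<le> (2 * M / r + 1) * norm z"
    proof -
      have "norm (x /\<^sub>R t) \<le> M / t" using x(1) \<open>t > 0\<close> by (simp add: field_simps)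
      also have "\<dots> = 2 * M / r * norm z" using False \<open>r > 0\<close> by (simp add: t_def)
      also have "\<dots> \<le> (2 * M / r + 1) * norm z" by (simp add: distrib_right)
      finally show ?thesis .
    qed
    ultimately show ?thesis by blast
  qed
qed

lemma summable_geometric_bound:
  fixes x :: "nat \<Rightarrow> 'a::{real_normed_vector,complete_space}"
  assumes bound: "\<And>k. norm (x k) \<le> C * (1/2)^k"
  shows "summable x" and "norm (suminf x) \<le> 2 * C"
proof -
  have geom: "summable (\<lambda>k. C * (1/2::real)^k)"
    by (intro summable_mult summable_geometric) simp
  then have norms: "summable (\<lambda>k. norm (x k))"
    by (rule summable_comparison_test[rotated]) (use bound in auto)
  then show "summable x" by (rule summable_norm_cancel_complete)
  have "norm (suminf x) \<le> (\<Sum>k. norm (x k))"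
    using norms by (rule summable_norm_complete)
  also have "\<dots> \<le> (\<Sum>k. C * (1/2::real)^k)"
    using bound norms geom by (rule suminf_le)
  also have "\<dots> = 2 * C"
    by (simp add: suminf_mult suminf_geometric)
  finally show "norm (suminf x) \<le> 2 * C" .
qed

lemma bounded_linear_solve_by_successive_approximation:
  fixes A :: "'a::{real_normed_vector,complete_space} \<Rightarrow> 'b::real_normed_vector"
  assumes bl: "bounded_linear A" and "K \<ge> 0"
    and approx: "\<And>z. \<exists>x. norm x \<le> K * norm z \<and> norm (A x - z) \<le> norm z / 2"
  shows "\<exists>x. A x = y \<and> norm x \<le> 2 * K * norm y"
proof -
  obtain g where g: "\<And>z. norm (g z) \<le> K * norm z" "\<And>z. norm (A (g z) - z) \<le> norm z / 2"
    using approx by metis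
  define Y where "Y k = ((\<lambda>z. z - A (g z)) ^^ k) y" for k
  have Y_Suc: "Y (Suc k) = Y k - A (g (Y k))" for k by (simp add: Y_def)
  have Y_bound: "norm (Y k) \<le> norm y * (1/2)^k" for k
  proof (induction k)
    case (Suc k)
    have "norm (Y (Suc k)) \<le> norm (Y k) / 2"
      using g(2) by (simp add: Y_Suc norm_minus_commute)
    with Suc show ?case by simp
  qed (simp add: Y_def)
  have "norm (g (Y k)) \<le> K * norm y * (1/2)^k" for k
    using order_trans[OF g(1) mult_left_mono[OF Y_bound \<open>K \<ge> 0\<close>]] by (simp add: mult.assoc)
  then have sum: "summable (\<lambda>k. g (Y k))" and norm: "norm (\<Sum>k. g (Y k)) \<le> 2 * (K * norm y)"
    by (rule summable_geometric_bound)+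
  have Y_0: "Y \<longlonglongrightarrow> 0"
    by (rule Lim_null_comparison[where g="\<lambda>k. norm y * (1/2)^k"])
       (use Y_bound in \<open>auto intro!: tendsto_mult_right_zero LIMSEQ_realpow_zero\<close>)
  have "(\<lambda>n. Y 0 - Y n) \<longlonglongrightarrow> y"
    using tendsto_diff[OF tendsto_const Y_0, of y] by (simp add: Y_def)
  moreover have "(\<Sum>k<n. A (g (Y k))) = Y 0 - Y n" for n
    using sum_lessThan_telescope'[of Y n] by (simp add: Y_Suc)
  ultimately have "(\<lambda>k. A (g (Y k))) sums y" by (simp add: sums_def)
  then have "A (\<Sum>k. g (Y k)) = y"
    using bounded_linear.sums[OF bl summable_sums[OF sum]] sums_unique2 by blast
  with norm show ?thesis by auto
qed

lemma bounded_linear_bij_bounded_below: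
  fixes A :: "'a::{real_normed_vector,complete_space} \<Rightarrow> 'b::{real_normed_vector,complete_space}"
  assumes bl: "bounded_linear A" and "bij A"
  obtains c where "c > 0" "\<And>x. c * norm x \<le> norm (A x)"
proof -
  have lin: "linear A" using bl by (rule bounded_linear.linear)
  obtain n y r where "r > 0" and ball: "ball y r \<subseteq> closure (A ` cball 0 (real n))"
    by (rule surj_closure_image_cball_contains_ball[OF bij_is_surj[OF \<open>bij A\<close>]])
  have ball0: "ball 0 r \<subseteq> closure (A ` cball 0 (2 * real n))"
    using lin ball by (rule closure_image_cball_contains_ball_0)
  obtain K where "K > 0" "\<And>z. \<exists>x. norm x \<le> K * norm z \<and> norm (A x - z) \<le> norm z / 2"
    using linear_approximate_inverse[OF lin \<open>r > 0\<close> ball0] by blast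
  then have "\<exists>x'. A x' = A x \<and> norm x' \<le> 2 * K * norm (A x)" for x
    by (intro bounded_linear_solve_by_successive_approximation[OF bl]) simp_all
  then have "norm x \<le> 2 * K * norm (A x)" for x
    using bij_is_inj[OF \<open>bij A\<close>] by (metis injD)
  then have "1 / (2 * K) * norm x \<le> norm (A x)" for x
    using \<open>K > 0\<close> by (simp add: field_simps)
  with \<open>K > 0\<close> show thesis by (intro that[of "1 / (2 * K)"]) auto
qed

lemma C1_linearization_error_small:
  fixes f :: "'a::real_normed_vector \<Rightarrow> 'b::real_normed_vector"
    and f' :: "'a \<Rightarrow> 'a \<Rightarrow>\<^sub>L 'b"
  assumes "open U" and "x0 \<in> U"
    and deriv: "\<And>x. x \<in> U \<Longrightarrow> (f has_derivative blinfun_apply (f' x)) (at x)"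
    and cont: "continuous_on U f'" and "\<delta> > 0"
  obtains \<epsilon> where "\<epsilon> > 0" "ball x0 \<epsilon> \<subseteq> U"
    "\<And>x y. x \<in> ball x0 \<epsilon> \<Longrightarrow> y \<in> ball x0 \<epsilon> \<Longrightarrow>
       norm (f x - f y - f' x0 (x - y)) \<le> \<delta> * norm (x - y)"
proof -
  have "isCont f' x0"
    using cont \<open>open U\<close> \<open>x0 \<in> U\<close> continuous_on_eq_continuous_at by blast
  then obtain d where "d > 0" and d: "\<And>x. dist x x0 < d \<Longrightarrow> dist (f' x) (f' x0) < \<delta>"
    using \<open>\<delta> > 0\<close> unfolding continuous_at_eps_delta by blast
  obtain e where "e > 0" "ball x0 e \<subseteq> U"
    using \<open>open U\<close> \<open>x0 \<in> U\<close> open_contains_ball by blast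
  define \<epsilon> where "\<epsilon> = min d e"
  have "\<epsilon> > 0" "ball x0 \<epsilon> \<subseteq> U"
    using \<open>d > 0\<close> \<open>e > 0\<close> \<open>ball x0 e \<subseteq> U\<close> by (auto simp: \<epsilon>_def)
  moreover have "norm (f x - f y - f' x0 (x - y)) \<le> \<delta> * norm (x - y)"
    if "x \<in> ball x0 \<epsilon>" "y \<in> ball x0 \<epsilon>" for x y
  proof -
    have "norm (f x - f y - f' x0 (x - y)) \<le> norm (x - y) * \<delta>"
    proof (rule differentiable_bound_linearization[where S="ball x0 \<epsilon>" and f'="\<lambda>z. blinfun_apply (f' z)"])
      show "y + t *\<^sub>R (x - y) \<in> ball x0 \<epsilon>" if "t \<in> {0..1}" for t
      proof -
        have "(1 - t) *\<^sub>R y + t *\<^sub>R x \<in> ball x0 \<epsilon>"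
          using convex_ball[of x0 \<epsilon>, unfolded convex_alt] \<open>x \<in> ball x0 \<epsilon>\<close> \<open>y \<in> ball x0 \<epsilon>\<close> that
          by simp
        then show ?thesis by (simp add: algebra_simps)
      qed
      show "(f has_derivative blinfun_apply (f' z)) (at z within ball x0 \<epsilon>)"
        if "z \<in> ball x0 \<epsilon>" for z
        using deriv that \<open>ball x0 \<epsilon> \<subseteq> U\<close> has_derivative_at_withinI by blast
      show "onorm (blinfun_apply (f' z) - blinfun_apply (f' x0)) \<le> \<delta>"
        if "z \<in> ball x0 \<epsilon>" for z
      proof -
        have "dist z x0 < d" using that by (simp add: \<epsilon>_def dist_commute)
        then have "norm (f' z - f' x0) \<le> \<delta>" using d by (simp add: dist_norm less_imp_le)
        then show ?thesis by (simp add: norm_blinfun.rep_eq minus_blinfun.rep_eq fun_diff_def)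
      qed
      show "x0 \<in> ball x0 \<epsilon>" using \<open>\<epsilon> > 0\<close> by simp
    qed
    then show ?thesis by (simp add: mult.commute)
  qed
  ultimately show thesis by (rule that)
qed

lemma inner_perturbed_ge:
  fixes a r :: "'a::real_inner" and c t :: real
  assumes "c \<ge> 0" and "c * t \<le> norm a" and "norm r \<le> c / 2 * t"
  shows "c\<^sup>2 / 2 * t\<^sup>2 \<le> inner (a + r) a"
proof -
  have "0 \<le> c / 2 * t" using assms(3) norm_ge_zero[of r] by linarith
  then have "c * t \<ge> 0" by simp
  have "inner (a + r) a \<ge> (norm a)\<^sup>2 - norm r * norm a"
    using Cauchy_Schwarz_ineq2[of r a] by (simp add: inner_add_left power2_norm_eq_inner)
  moreover have "norm r * norm a \<le> c / 2 * t * norm a"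
    using mult_right_mono[OF assms(3) norm_ge_zero] .
  moreover have "(norm a)\<^sup>2 - c / 2 * t * norm a - c\<^sup>2 / 2 * t\<^sup>2
      = (norm a - c * t) * (norm a + c * t / 2)"
    by (simp add: power2_eq_square field_simps)
  moreover have "(norm a - c * t) * (norm a + c * t / 2) \<ge> 0"
    using assms(2) \<open>c * t \<ge> 0\<close> by (intro mult_nonneg_nonneg) auto
  ultimately show ?thesis by linarith
qed

theorem theorem3p3:
  fixes f :: "'a::{real_inner,complete_space} \<Rightarrow> 'a"
    and f' :: "'a \<Rightarrow> 'a \<Rightarrow>\<^sub>L 'a"
    and U :: "'a set" and xs :: 'a and v :: "'a \<Rightarrow> 'a"
  assumes U_open: "open U" and xs_in: "xs \<in> U"
    and deriv: "\<And>x. x \<in> U \<Longrightarrow> (f has_derivative blinfun_apply (f' x)) (at x)"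
    and cont: "continuous_on U f'"
    and inv: "bij (blinfun_apply (f' xs))"
    and sol: "\<exists>x\<in>U. f x = 0"
    and v_def: "v = (\<lambda>x. blinfun_apply (f' xs) x)"
  shows "\<exists>\<epsilon>>0. ball xs \<epsilon> \<subseteq> U \<and> (\<exists>\<alpha>>0. \<forall>x\<in>ball xs \<epsilon>. \<forall>y\<in>ball xs \<epsilon>.
           inner (f x - f y) (v x - v y) \<ge> \<alpha> * (norm (x - y))\<^sup>2)"
proof -
  obtain c where "c > 0" and below: "\<And>h. c * norm h \<le> norm (f' xs h)"
    using bounded_linear_bij_bounded_below[OF blinfun.bounded_linear_right inv] by blast
  obtain \<epsilon> where "\<epsilon> > 0" "ball xs \<epsilon> \<subseteq> U" and lin_error:
    "\<And>x y. x \<in> ball xs \<epsilon> \<Longrightarrow> y \<in> ball xs \<epsilon> \<Longrightarrow>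
       norm (f x - f y - f' xs (x - y)) \<le> c / 2 * norm (x - y)"
    using C1_linearization_error_small[OF U_open xs_in deriv cont half_gt_zero[OF \<open>c > 0\<close>]]
    by blast
  have "c\<^sup>2 / 2 * (norm (x - y))\<^sup>2 \<le> inner (f x - f y) (v x - v y)"
    if "x \<in> ball xs \<epsilon>" "y \<in> ball xs \<epsilon>" for x y
  proof -
    have "c\<^sup>2 / 2 * (norm (x - y))\<^sup>2
        \<le> inner (f' xs (x - y) + (f x - f y - f' xs (x - y))) (f' xs (x - y))"
      using \<open>c > 0\<close> by (intro inner_perturbed_ge below lin_error that) simp
    then show ?thesis by (simp add: v_def blinfun.diff_right)
  qed
  moreover have "c\<^sup>2 / 2 > 0" using \<open>c > 0\<close> by simp
  ultimately show ?thesis using \<open>\<epsilon> > 0\<close> \<open>ball xs \<epsilon> \<subseteq> U\<close> by blast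
qed

end
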